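(* Let $(M,g,S)$ be as in the context, $p\in M$, and let $u\in T_pM$ be such that $\{u,Su,S^2u,S^3u\}$ is an orthonormal basis of $T_pM$ with respect to $g$. Give each $v\in T_pM$ the coordinates $(x,y,z,t)$ defined by $v=xu+ySu+zS^2u+tS^3u$, and define new coordinates $(x',y',z',t')$ by $x=\frac12(x'-y'+z'-t')$, $y=\frac{\sqrt2}{2}(-y'+t')$, $z=-\frac12(x'+y'+z'+t')$, $t=\frac{\sqrt2}{2}(-x'+z')$. For $a\in\mathbb R$, the hyper-sphere $s=\{v\in T_pM:\tilde g(v,v)=a\}$ has, in the coordinates $(x',y',z',t')$, the equation $$x'^2+y'^2-z'^2-t'^2=\frac{a}{\sqrt2}.$$
   Context: $M$ is a 4-dimensional differentiable manifold with a positive definite metric $g$ and a tensor field $S$ of type $(1,1)$ whose components in some local coordinate system form the matrix with rows $(0,1,0,0)$, $(0,0,1,0)$, $(0,0,0,1)$, $(-1,0,0,0)$; hence $S^4=-\mathrm{id}$. It is assumed that $g(Su,Sv)=g(u,v)$ for all vector fields $u,v$. The associated metric is $\tilde g(u,v)=g(u,Sv)+g(Su,v)$. *)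

theory Defs
  imports "HOL-Analysis.Analysis"
begin

definition assoc_metric :: "('v \<Rightarrow> 'v \<Rightarrow> real) \<Rightarrow> ('v \<Rightarrow> 'v) \<Rightarrow> 'v \<Rightarrow> 'v \<Rightarrow> real" where
  "assoc_metric g S v w = g v (S w) + g (S v) w"

definition hypersphere :: "('v \<Rightarrow> 'v \<Rightarrow> real) \<Rightarrow> ('v \<Rightarrow> 'v) \<Rightarrow> real \<Rightarrow> 'v set" where
  "hypersphere g S a = {v. assoc_metric g S v v = a}"

end

theory Submission
  imports Defs
begin

text \<open>
  In the orthonormal frame \<open>u, Su, S\<^sup>2u, S\<^sup>3u\<close> the operator \<open>S\<close> shifts coordinates
  cyclically with a sign, \<open>(x, y, z, t) \<mapsto> (-t, x, y, z)\<close>, so both \<open>g(v, Sv)\<close> and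
  \<open>g(Sv, v)\<close> equal \<open>xy + yz + zt - xt\<close>. The quadratic form \<open>2(xy + yz + zt - xt)\<close> has
  eigenvalues \<open>\<plusminus>\<surd>2\<close>, each of multiplicity two, and the primed coordinates are an
  orthogonal change of basis onto its eigenvectors.
\<close>

lemma bilinear_orthonormal_sum:
  fixes n :: nat
  assumes "bilinear g"
    and "\<forall>i<n. \<forall>j<n. g (e i) (e j) = (if i = j then 1 else 0)"
  shows "g (\<Sum>i<n. a i *\<^sub>R e i) (\<Sum>j<n. b j *\<^sub>R e j) = (\<Sum>i<n. a i * b i)"
proof -
  have "g (\<Sum>i<n. a i *\<^sub>R e i) (\<Sum>j<n. b j *\<^sub>R e j)
      = (\<Sum>(i, j)\<in>{..<n} \<times> {..<n}. a i * b j * g (e i) (e j))"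
    by (simp add: bilinear_sum[OF assms(1)] bilinear_lmul[OF assms(1)] bilinear_rmul[OF assms(1)]
        case_prod_beta mult_ac)
  also have "\<dots> = (\<Sum>(i, j)\<in>{..<n} \<times> {..<n}. a i * b j * (if i = j then 1 else 0))"
    using assms(2) by (intro sum.cong) auto
  also have "\<dots> = (\<Sum>i<n. \<Sum>j<n. a i * b j * (if i = j then 1 else 0))"
    by (simp add: sum.cartesian_product)
  also have "\<dots> = (\<Sum>i<n. a i * b i)"
    by (simp add: if_distrib[of "(*) _"] cong: if_cong)
  finally show ?thesis .
qed

lemma sum_lessThan_4:
  fixes f :: "nat \<Rightarrow> 'a::comm_monoid_add"
  shows "(\<Sum>i<4. f i) = f 0 + f 1 + f 2 + f 3"
  by (simp add: eval_nat_numeral add.assoc)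

lemma linear_image_skew_cyclic_frame:
  assumes "linear S" and "(S ^^ 4) u = - u"
  shows "S (x *\<^sub>R u + y *\<^sub>R S u + z *\<^sub>R (S ^^ 2) u + t *\<^sub>R (S ^^ 3) u)
    = (- t) *\<^sub>R u + x *\<^sub>R S u + y *\<^sub>R (S ^^ 2) u + z *\<^sub>R (S ^^ 3) u"
proof -
  have "S ((S ^^ 3) u) = - u"
    using assms(2) by (simp add: eval_nat_numeral)
  then show ?thesis
    using assms(1)
    by (simp add: linear_add linear_scale eval_nat_numeral algebra_simps)
qed

lemma assoc_metric_skew_cyclic_frame:
  fixes x y z t :: real
  assumes "bilinear g" and "linear S" and "(S ^^ 4) u = - u"
    and "\<forall>i<4. \<forall>j<4. g ((S ^^ i) u) ((S ^^ j) u) = (if i = j then 1 else 0)"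
  defines "v \<equiv> x *\<^sub>R u + y *\<^sub>R S u + z *\<^sub>R (S ^^ 2) u + t *\<^sub>R (S ^^ 3) u"
  shows "assoc_metric g S v v = 2 * (x * y + y * z + z * t - x * t)"
proof -
  define e where "e i = (S ^^ i) u" for i
  define c where "c = (!) [x, y, z, t]"
  define d where "d = (!) [- t, x, y, z]"
  have v: "v = (\<Sum>i<4. c i *\<^sub>R e i)"
    by (simp add: v_def sum_lessThan_4 c_def e_def)
  have Sv: "S v = (\<Sum>i<4. d i *\<^sub>R e i)"
    using linear_image_skew_cyclic_frame[OF assms(2,3)]
    by (simp add: v_def sum_lessThan_4 d_def e_def)
  have orthonormal: "\<forall>i<4. \<forall>j<4. g (e i) (e j) = (if i = j then 1 else 0)"
    using assms(4) by (simp add: e_def)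
  have "g v (S v) = (\<Sum>i<4. c i * d i)" "g (S v) v = (\<Sum>i<4. d i * c i)"
    using bilinear_orthonormal_sum[OF assms(1) orthonormal, of c d]
      bilinear_orthonormal_sum[OF assms(1) orthonormal, of d c]
    unfolding v[symmetric] Sv[symmetric] .
  then show ?thesis
    by (simp add: assoc_metric_def sum_lessThan_4 c_def d_def algebra_simps)
qed

lemma hyperbolic_coordinates:
  fixes x' y' z' t' :: real
  assumes "x = (x' - y' + z' - t') / 2" and "y = sqrt 2 / 2 * (- y' + t')"
    and "z = - (x' + y' + z' + t') / 2" and "t = sqrt 2 / 2 * (- x' + z')"
  shows "2 * (x * y + y * z + z * t - x * t) = sqrt 2 * (x'^2 + y'^2 - z'^2 - t'^2)"
  unfolding assms power2_eq_square by (simp add: field_simps; algebra)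

theorem theorem3p1:
  fixes g :: "'v::real_vector \<Rightarrow> 'v \<Rightarrow> real" and S :: "'v \<Rightarrow> 'v"
    and u :: 'v and a :: real
  assumes g_bilinear: "bilinear g"
    and g_sym: "\<forall>v w. g v w = g w v"
    and g_posdef: "\<forall>v. v \<noteq> 0 \<longrightarrow> g v v > 0"
    and S_linear: "linear S"
    and S4: "\<forall>v. (S ^^ 4) v = - v"
    and S_isom: "\<forall>v w. g (S v) (S w) = g v w"
    and u_orthonormal: "\<forall>i<4. \<forall>j<4. g ((S ^^ i) u) ((S ^^ j) u) = (if i = j then 1 else 0)"
    and u_spans: "span {(S ^^ i) u | i. i < (4::nat)} = UNIV"
  shows "\<forall>x' y' z' t' :: real.
     let x = (x' - y' + z' - t') / 2;
         y = sqrt 2 / 2 * (- y' + t');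
         z = - (x' + y' + z' + t') / 2;
         t = sqrt 2 / 2 * (- x' + z');
         v = x *\<^sub>R u + y *\<^sub>R S u + z *\<^sub>R (S ^^ 2) u + t *\<^sub>R (S ^^ 3) u
     in (v \<in> hypersphere g S a \<longleftrightarrow> x'^2 + y'^2 - z'^2 - t'^2 = a / sqrt 2)"
proof (intro allI)
  fix x' y' z' t' :: real
  let ?x = "(x' - y' + z' - t') / 2" and ?y = "sqrt 2 / 2 * (- y' + t')"
    and ?z = "- (x' + y' + z' + t') / 2" and ?t = "sqrt 2 / 2 * (- x' + z')"
  let ?v = "?x *\<^sub>R u + ?y *\<^sub>R S u + ?z *\<^sub>R (S ^^ 2) u + ?t *\<^sub>R (S ^^ 3) u"
  have "assoc_metric g S ?v ?v = 2 * (?x * ?y + ?y * ?z + ?z * ?t - ?x * ?t)"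
    by (rule assoc_metric_skew_cyclic_frame[OF g_bilinear S_linear S4[rule_format] u_orthonormal])
  also have "\<dots> = sqrt 2 * (x'^2 + y'^2 - z'^2 - t'^2)"
    by (rule hyperbolic_coordinates) (rule refl)+
  finally show "let x = ?x; y = ?y; z = ?z; t = ?t;
      v = x *\<^sub>R u + y *\<^sub>R S u + z *\<^sub>R (S ^^ 2) u + t *\<^sub>R (S ^^ 3) u
    in (v \<in> hypersphere g S a \<longleftrightarrow> x'^2 + y'^2 - z'^2 - t'^2 = a / sqrt 2)"
    by (auto simp: Let_def hypersphere_def field_simps)
qed

end
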